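(* Let $q=2^m$ with $m\ge2$, $c\in\mathrm{GF}(q^2)^*\setminus U_{q+1}$, and $e$ an integer with $1\le e\le q$. Let $a_0+a_1u+\cdots+a_qu^q$ ($a_i\in\mathrm{GF}(q^2)$) be the polynomial expansion of the function $U_{q+1}\to\mathrm{GF}(q^2)$, $u\mapsto\left(\frac{u+c^q}{cu+1}\right)^e$. Then $a_0=0$ and $a_1=c^{q(e-1)}$.
   Context: $U_{q+1}$ denotes the set of $(q+1)$-th roots of unity in $\mathrm{GF}(q^2)$. The polynomial expansion of a function $f:U_{q+1}\to\mathrm{GF}(q^2)$ is the unique polynomial $\sum_{i=0}^{q}a_iu^i$ of degree at most $q$ with $f(u)=\sum_{i=0}^q a_iu^i$ for all $u\in U_{q+1}$. *)

theory Defs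
  imports "HOL-Computational_Algebra.Polynomial"
begin

definition unit_roots :: "nat \<Rightarrow> 'a::field set" where
  "unit_roots n = {u. u ^ n = 1}"

definition is_poly_expansion :: "nat \<Rightarrow> ('a::field \<Rightarrow> 'a) \<Rightarrow> 'a poly \<Rightarrow> bool" where
  "is_poly_expansion q f p \<longleftrightarrow> degree p \<le> q \<and> (\<forall>u \<in> unit_roots (q + 1). poly p u = f u)"

end

theory Submission
  imports Defs "HOL-Computational_Algebra.Primes"
begin

text \<open>
  In a field with \<open>q^2\<close> elements the group \<open>U\<close> of \<open>(q+1)\<close>-th roots of unity has \<open>q + 1\<close>
  elements, so the power sum of \<open>u^k\<close> over \<open>U\<close> is \<open>q + 1 = 1\<close> when \<open>q + 1\<close> divides \<open>k\<close>
  and \<open>0\<close> otherwise. Hence a polynomial of degree at most \<open>q\<close> is recovered from its values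
  \<open>f\<close> on \<open>U\<close> as \<open>a\<^sub>i = \<Sum>u\<in>U. f u * u^(q + 1 - i)\<close>.
  In characteristic 2 the Moebius map \<open>\<phi> u = (u + d) / (c * u + 1)\<close>, \<open>d = c^q\<close>, is an
  involution of \<open>U\<close> with \<open>(\<phi> u)^q = 1 / \<phi> u\<close>. Substituting \<open>u = \<phi> v\<close> gives
  \<open>a\<^sub>0 = \<Sum>v\<in>U. v^e = 0\<close> and \<open>a\<^sub>1 = \<Sum>v\<in>U. v^e * (c * v + 1) / (v - d)\<close>. Expanding
  \<open>1 / (v - d)\<close> as a geometric sum in \<open>v\<close>, a single power of \<open>v\<close> survives in each of the
  two resulting power sums, and \<open>a\<^sub>1 = (c * d^e + d^(e - 1)) / (1 + c * d) = d^(e - 1)\<close>.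
\<close>


lemma finite_field_power_card_minus_one:
  fixes x :: "'a::{field,finite}"
  assumes "x \<noteq> 0"
  shows "x ^ (card (UNIV :: 'a set) - 1) = 1"
proof -
  have "(\<Prod>y\<in>UNIV - {0}. x * y) = (\<Prod>y\<in>UNIV - {0}. y)"
    by (rule prod.reindex_bij_witness[of _ "\<lambda>y. y / x" "\<lambda>y. x * y"]) (use assms in auto)
  then have "x ^ card (UNIV - {0::'a}) * \<Prod>(UNIV - {0::'a}) = \<Prod>(UNIV - {0::'a})"
    by (simp add: prod.distrib)
  moreover have "\<Prod>(UNIV - {0::'a}) \<noteq> 0"
    by simp
  ultimately show ?thesis
    by (simp add: card_Diff_singleton)
qed

lemma CHAR_eq_2_if_even_card:
  assumes "even (card (UNIV :: 'a::{field,finite} set))"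
  shows "CHAR('a) = 2"
proof -
  have "card (UNIV :: 'a set) > 0"
    by (simp add: finite_UNIV_card_ge_0)
  with assms have "odd (card (UNIV :: 'a set) - 1)"
    by simp
  then have "(-1 :: 'a) = (-1) ^ (card (UNIV :: 'a set) - 1)"
    by simp
  also have "\<dots> = 1"
    by (rule finite_field_power_card_minus_one) simp
  finally have "of_nat 2 = (0 :: 'a)"
    by (simp add: eq_neg_iff_add_eq_0)
  then have "CHAR('a) dvd 2"
    by (simp only: of_nat_eq_0_iff_char_dvd)
  then show ?thesis
    using two_is_prime_nat CHAR_not_1[where 'a = 'a] by (auto simp: prime_nat_iff)
qed

lemma
  fixes z :: "'a::idom"
  assumes "n > 0"
  shows finite_power_eq: "finite {x. x ^ n = z}"
    and card_power_eq_le: "card {x. x ^ n = z} \<le> n"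
proof -
  define p where "p = Polynomial.monom 1 n + [:-z:]"
  have "degree p = n"
    using assms by (simp add: p_def degree_monom_eq degree_add_eq_left)
  moreover have roots: "{x. x ^ n = z} = {x. poly p x = 0}"
    by (simp add: p_def poly_monom)
  ultimately have "p \<noteq> 0"
    using assms by auto
  then show "finite {x. x ^ n = z}" "card {x. x ^ n = z} \<le> n"
    using poly_roots_finite card_poly_roots_bound \<open>degree p = n\<close> roots by metis+
qed

lemma power_mod_eq_if_mem_unit_roots:
  assumes "u \<in> unit_roots n"
  shows "u ^ (k mod n) = u ^ k"
proof -
  have "u ^ k = u ^ (n * (k div n) + k mod n)"
    by simp
  also have "\<dots> = (u ^ n) ^ (k div n) * u ^ (k mod n)"
    by (simp only: power_add power_mult)
  finally show ?thesis
    using assms by (simp add: unit_roots_def)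
qed

lemma power_eq_inverse_if_mem_unit_roots:
  assumes "u \<in> unit_roots (n + 1)"
  shows "u ^ n = inverse u"
  using assms inverse_unique[of u "u ^ n"] by (simp add: unit_roots_def)

lemma card_unit_roots:
  assumes "n * k = card (UNIV :: 'a::{field,finite} set) - 1"
  shows "card (unit_roots n :: 'a set) = n"
proof (rule antisym)
  have "card (UNIV :: 'a set) \<ge> 2"
    using card_mono[of UNIV "{0, 1 :: 'a}"] by simp
  then have "n * k > 0"
    using assms by simp
  then have "n > 0" "k > 0"
    by simp_all
  then show "card (unit_roots n :: 'a set) \<le> n"
    by (simp add: unit_roots_def card_power_eq_le)
  \<comment> \<open>The map \<open>y \<mapsto> y ^ k\<close> sends the \<open>n * k\<close> non-zero elements into \<open>unit_roots n\<close>
      with fibres of size at most \<open>k\<close>.\<close>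
  have "UNIV - {0} \<subseteq> (\<Union>z\<in>unit_roots n. {y::'a. y ^ k = z})"
  proof
    fix y :: 'a
    assume "y \<in> UNIV - {0}"
    then have "y ^ (n * k) = 1"
      using finite_field_power_card_minus_one[of y] assms by simp
    then have "(y ^ k) ^ n = 1"
      by (simp add: power_mult mult.commute)
    then show "y \<in> (\<Union>z\<in>unit_roots n. {y. y ^ k = z})"
      by (simp add: unit_roots_def)
  qed
  then have "n * k \<le> card (\<Union>z\<in>unit_roots n. {y::'a. y ^ k = z})"
    using assms card_mono[of _ "UNIV - {0::'a}"] by (simp add: card_Diff_singleton)
  also have "\<dots> \<le> (\<Sum>z\<in>unit_roots n. card {y::'a. y ^ k = z})"
    by (rule card_UN_le) simp
  also have "\<dots> \<le> card (unit_roots n :: 'a set) * k"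
    using sum_bounded_above[OF card_power_eq_le[OF \<open>k > 0\<close>]] by simp
  finally show "n \<le> card (unit_roots n :: 'a set)"
    using \<open>k > 0\<close> by simp
qed

lemma sum_unit_roots_power:
  assumes card: "card (unit_roots n :: 'a::field set) = n" and "n > 0"
  shows "(\<Sum>u\<in>unit_roots n. u ^ k :: 'a) = (if n dvd k then of_nat n else 0)"
proof (cases "n dvd k")
  case True
  then have "u ^ k = 1" if "u \<in> unit_roots n" for u :: 'a
    using that power_mod_eq_if_mem_unit_roots[OF that, of k] by simp
  with True card show ?thesis
    by simp
next
  case False
  then have "0 < k mod n" "k mod n < n"
    using \<open>n > 0\<close> by (auto simp: dvd_eq_mod_eq_0)
  then have "card {x::'a. x ^ (k mod n) = 1} < card (unit_roots n :: 'a set)"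
    using card card_power_eq_le[of "k mod n" "1::'a"] by simp
  then have "\<not> unit_roots n \<subseteq> {x::'a. x ^ (k mod n) = 1}"
    using card_mono[OF finite_power_eq[OF \<open>0 < k mod n\<close>]] leD by blast
  then obtain w :: 'a where w: "w \<in> unit_roots n" "w ^ (k mod n) \<noteq> 1"
    by blast
  then have "w ^ k \<noteq> 1"
    by (simp add: power_mod_eq_if_mem_unit_roots)
  have "w \<noteq> 0"
    using w(1) \<open>n > 0\<close> by (auto simp: unit_roots_def power_0_left)
  have "(\<Sum>u\<in>unit_roots n. u ^ k) = (\<Sum>u\<in>unit_roots n. (w * u) ^ k)"
    by (rule sum.reindex_bij_witness[of _ "\<lambda>u. w * u" "\<lambda>u. u / w"])
      (use w(1) \<open>w \<noteq> 0\<close> in \<open>auto simp: unit_roots_def power_mult_distrib power_divide\<close>)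
  also have "\<dots> = w ^ k * (\<Sum>u\<in>unit_roots n. u ^ k)"
    by (simp add: power_mult_distrib sum_distrib_left)
  finally show ?thesis
    using \<open>w ^ k \<noteq> 1\<close> False by (simp add: algebra_simps)
qed

lemma dvd_less_double_imp_eq:
  fixes n t :: nat
  assumes "n dvd t" "0 < t" "t < 2 * n"
  shows "t = n"
proof -
  obtain j where j: "t = n * j"
    using assms(1) ..
  with assms(2,3) have "0 < j" "n * j < n * 2"
    by simp_all
  then have "j = 1"
    by simp
  with j show ?thesis
    by simp
qed

corollary sum_unit_roots_power_less_double:
  assumes "card (unit_roots n :: 'a::field set) = n" "0 < t" "t < 2 * n"
  shows "(\<Sum>u\<in>unit_roots n. u ^ t :: 'a) = (if t = n then of_nat n else 0)"
proof -
  have "n > 0" "n dvd t \<longleftrightarrow> t = n"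
    using assms dvd_less_double_imp_eq[of n t] by auto
  then show ?thesis
    by (simp add: sum_unit_roots_power[OF assms(1)])
qed

lemma sum_unit_roots_poly_mult_power:
  fixes p :: "'a::field poly"
  assumes "card (unit_roots n :: 'a set) = n" "degree p < n" "i < n"
  shows "(\<Sum>u\<in>unit_roots n. poly p u * u ^ (n - i)) = of_nat n * coeff p i"
proof -
  have poly_p: "poly p u = (\<Sum>j<n. coeff p j * u ^ j)" for u :: 'a
    unfolding poly_altdef using assms(2)
    by (intro sum.mono_neutral_left) (auto simp: coeff_eq_0)
  have "(\<Sum>u\<in>unit_roots n. poly p u * u ^ (n - i))
      = (\<Sum>j<n. coeff p j * (\<Sum>u\<in>unit_roots n. u ^ (j + (n - i))))"
    by (simp add: poly_p sum_distrib_left sum_distrib_right power_add mult.assoc sum.swap[of _ "unit_roots n"])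
  also have "\<dots> = (\<Sum>j<n. coeff p j * (if j = i then of_nat n else 0))"
    using assms by (intro sum.cong refl) (auto simp: sum_unit_roots_power_less_double)
  also have "\<dots> = of_nat n * coeff p i"
    using assms(3) by (simp add: if_distrib mult.commute cong: if_cong)
  finally show ?thesis .
qed

lemma sum_unit_roots_power_divide_diff:
  fixes d :: "'a::field"
  assumes "card (unit_roots n :: 'a set) = n" "d ^ n \<noteq> 1" "1 \<le> j" "j \<le> n"
  shows "(\<Sum>u\<in>unit_roots n. u ^ j / (u - d)) = of_nat n * d ^ (j - 1) / (1 - d ^ n)"
proof -
  have "u ^ j / (u - d) = (\<Sum>i<n. d ^ (n - Suc i) * u ^ (j + i)) / (1 - d ^ n)"
    if "u \<in> unit_roots n" for u
  proof -
    have "1 - d ^ n = (u - d) * (\<Sum>i<n. d ^ (n - Suc i) * u ^ i)"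
      using that power_diff_sumr2[of u n d] by (simp add: unit_roots_def)
    moreover have "u - d \<noteq> 0"
      using that assms(2) by (auto simp: unit_roots_def)
    ultimately have "1 / (u - d) = (\<Sum>i<n. d ^ (n - Suc i) * u ^ i) / (1 - d ^ n)"
      using assms(2) by (simp add: field_simps)
    then have "u ^ j / (u - d) = u ^ j * (\<Sum>i<n. d ^ (n - Suc i) * u ^ i) / (1 - d ^ n)"
      by (metis times_divide_eq_right mult.right_neutral)
    then show ?thesis
      by (simp add: sum_distrib_left power_add mult_ac)
  qed
  then have "(\<Sum>u\<in>unit_roots n. u ^ j / (u - d))
      = (\<Sum>i<n. d ^ (n - Suc i) * (\<Sum>u\<in>unit_roots n. u ^ (j + i))) / (1 - d ^ n)"
    by (simp add: sum_divide_distrib sum_distrib_left sum.swap[of _ "unit_roots n"])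
  also have "\<dots> = (\<Sum>i<n. d ^ (n - Suc i) * (if i = n - j then of_nat n else 0)) / (1 - d ^ n)"
    using assms by (intro arg_cong[where f = "\<lambda>x. x / _"] sum.cong refl)
      (auto simp: sum_unit_roots_power_less_double)
  also have "\<dots> = of_nat n * d ^ (j - 1) / (1 - d ^ n)"
    using assms(3,4) by (simp add: if_distrib mult.commute Suc_diff_Suc cong: if_cong)
  finally show ?thesis .
qed

locale unit_roots_moebius =
  fixes q m :: nat and c :: "'a::{field,finite}"
  assumes card_UNIV: "card (UNIV :: 'a set) = q ^ 2"
    and q_eq: "q = 2 ^ m" and m_pos: "m > 0"
    and c_nonzero: "c \<noteq> 0" and c_not_unit_root: "c \<notin> unit_roots (q + 1)"
begin

definition moebius :: "'a \<Rightarrow> 'a" where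
  "moebius u = (u + c ^ q) / (c * u + 1)"

lemma CHAR_eq_2: "CHAR('a) = 2"
  by (rule CHAR_eq_2_if_even_card) (simp add: card_UNIV q_eq m_pos)

lemma two_eq_zero: "(2 :: 'a) = 0"
  using of_nat_CHAR[where 'a = 'a] by (simp add: CHAR_eq_2)

lemma add_eq_0_iff_eq: "x + y = 0 \<longleftrightarrow> x = y" for x y :: 'a
  by (simp only: add_eq_0_iff2 uminus_CHAR_2[OF CHAR_eq_2])

lemma of_nat_q_eq_0: "of_nat q = (0 :: 'a)"
  using m_pos by (simp add: q_eq two_eq_zero)

lemma power_q_add: "(x + y) ^ q = x ^ q + y ^ q" for x y :: 'a
  by (rule freshmans_dream') (simp_all add: CHAR_eq_2 q_eq)

lemma card_unit_roots_Suc_q: "card (unit_roots (q + 1) :: 'a set) = q + 1"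
proof (rule card_unit_roots)
  have "q > 0"
    by (simp add: q_eq)
  then show "(q + 1) * (q - 1) = card (UNIV :: 'a set) - 1"
    by (simp add: card_UNIV power2_eq_square algebra_simps)
qed

lemma power_q_power_q: "(c ^ q) ^ q = c"
proof -
  have "(c ^ q) ^ q = c * c ^ (card (UNIV :: 'a set) - 1)"
    using m_pos by (simp add: card_UNIV q_eq power2_eq_square flip: power_mult power_Suc)
  then show ?thesis
    using finite_field_power_card_minus_one[OF c_nonzero] by simp
qed

lemma power_q_power_Suc_q: "(c ^ q) ^ (q + 1) = c * c ^ q"
  by (simp add: power_q_power_q)

lemma c_mult_power_q_neq_1: "c * c ^ q \<noteq> 1"
  using c_not_unit_root by (simp add: unit_roots_def)

lemma one_add_c_mult_power_q_nonzero: "1 + c * c ^ q \<noteq> 0"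
  using c_mult_power_q_neq_1 by (simp add: add_eq_0_iff_eq eq_commute[of 1])

lemma
  assumes "u \<in> unit_roots (q + 1)"
  shows mult_c_add_1_nonzero: "c * u + 1 \<noteq> 0"
    and add_power_q_nonzero: "u + c ^ q \<noteq> 0"
proof -
  have u: "u ^ (q + 1) = 1"
    using assms by (simp add: unit_roots_def)
  show "c * u + 1 \<noteq> 0"
  proof
    assume "c * u + 1 = 0"
    then have "(c * u) ^ (q + 1) = 1"
      by (simp add: add_eq_0_iff_eq)
    then have "c ^ (q + 1) = 1"
      using u by (simp only: power_mult_distrib mult_1_right)
    with c_mult_power_q_neq_1 show False
      by simp
  qed
  show "u + c ^ q \<noteq> 0"
  proof
    assume "u + c ^ q = 0"
    then have "(c ^ q) ^ (q + 1) = 1"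
      using u by (simp add: add_eq_0_iff_eq)
    with c_mult_power_q_neq_1 show False
      by (simp only: power_q_power_Suc_q)
  qed
qed

lemma moebius_power_q:
  assumes "u \<in> unit_roots (q + 1)"
  shows "moebius u ^ q = (c * u + 1) / (u + c ^ q)"
proof -
  have "u \<noteq> 0"
    using assms by (auto simp: unit_roots_def)
  have "moebius u ^ q = (u ^ q + (c ^ q) ^ q) / ((c * u) ^ q + 1)"
    by (simp add: moebius_def power_divide power_q_add)
  also have "\<dots> = (inverse u + c) / (c ^ q * inverse u + 1)"
    by (simp add: power_q_power_q power_mult_distrib power_eq_inverse_if_mem_unit_roots[OF assms])
  also have "\<dots> = ((c * u + 1) / u) / ((u + c ^ q) / u)"
    using \<open>u \<noteq> 0\<close> by (simp add: field_simps)
  also have "\<dots> = (c * u + 1) / (u + c ^ q)"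
    using \<open>u \<noteq> 0\<close> by simp
  finally show ?thesis .
qed

lemma moebius_mem_unit_roots:
  assumes "u \<in> unit_roots (q + 1)"
  shows "moebius u \<in> unit_roots (q + 1)"
proof -
  have "moebius u ^ q * moebius u = (c * u + 1) / (u + c ^ q) * moebius u"
    by (simp only: moebius_power_q[OF assms])
  also have "\<dots> = 1"
    using mult_c_add_1_nonzero[OF assms] add_power_q_nonzero[OF assms] by (simp add: moebius_def)
  finally have "moebius u ^ q * moebius u = 1" .
  then show ?thesis
    by (simp add: unit_roots_def mult.commute)
qed

lemma moebius_moebius:
  assumes "u \<in> unit_roots (q + 1)"
  shows "moebius (moebius u) = u"
proof -
  define d where "d = c ^ q"
  define w where "w = c * u + 1"
  have "w \<noteq> 0"
    using mult_c_add_1_nonzero[OF assms] by (simp add: w_def)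
  have "1 + c * d \<noteq> 0"
    unfolding d_def by (rule one_add_c_mult_power_q_nonzero)
  have num: "(u + d) / w + d = u * (1 + c * d) / w"
  proof -
    have "(u + d) + d * w = u * (1 + c * d)"
      using add_eq_0_iff_eq[of d d] by (simp add: w_def algebra_simps)
    with \<open>w \<noteq> 0\<close> show ?thesis
      by (simp add: field_simps)
  qed
  have den: "c * ((u + d) / w) + 1 = (1 + c * d) / w"
  proof -
    have "c * (u + d) + w = 1 + c * d"
      using add_eq_0_iff_eq[of "c * u" "c * u"] by (simp add: w_def algebra_simps)
    with \<open>w \<noteq> 0\<close> show ?thesis
      by (simp add: field_simps)
  qed
  have "moebius (moebius u) = ((u + d) / w + d) / (c * ((u + d) / w) + 1)"
    by (simp add: moebius_def d_def w_def)
  also have "\<dots> = u"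
    using \<open>w \<noteq> 0\<close> \<open>1 + c * d \<noteq> 0\<close> by (simp only: num den) simp
  finally show ?thesis .
qed

lemma bij_betw_moebius: "bij_betw moebius (unit_roots (q + 1)) (unit_roots (q + 1))"
  by (rule bij_betw_byWitness[where f' = moebius]) (use moebius_moebius moebius_mem_unit_roots in blast)+

lemma coeff_eq_sum_unit_roots:
  fixes f :: "'a \<Rightarrow> 'a"
  assumes "is_poly_expansion q f p" "i \<le> q"
  shows "coeff p i = (\<Sum>u\<in>unit_roots (q + 1). f u * u ^ (q + 1 - i))"
proof -
  have "(\<Sum>u\<in>unit_roots (q + 1). f u * u ^ (q + 1 - i))
      = (\<Sum>u\<in>unit_roots (q + 1). poly p u * u ^ (q + 1 - i))"
    using assms(1) by (intro sum.cong) (simp_all add: is_poly_expansion_def)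
  also have "\<dots> = coeff p i"
    using assms sum_unit_roots_poly_mult_power[OF card_unit_roots_Suc_q, of p i]
    by (simp add: is_poly_expansion_def of_nat_q_eq_0)
  finally show ?thesis ..
qed

lemma sum_moebius_power:
  assumes "1 \<le> e" "e \<le> q"
  shows "(\<Sum>u\<in>unit_roots (q + 1). moebius u ^ e) = 0"
proof -
  have "(\<Sum>u\<in>unit_roots (q + 1). moebius u ^ e) = (\<Sum>u\<in>unit_roots (q + 1). u ^ e)"
    by (rule sum.reindex_bij_betw[OF bij_betw_moebius])
  also have "\<dots> = 0"
    using assms sum_unit_roots_power_less_double[OF card_unit_roots_Suc_q, of e] by simp
  finally show ?thesis .
qed

lemma sum_moebius_power_mult_power_q:
  assumes "1 \<le> e" "e \<le> q"
  shows "(\<Sum>u\<in>unit_roots (q + 1). moebius u ^ e * u ^ q) = c ^ (q * (e - 1))"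
proof -
  define d where "d = c ^ q"
  have d_power: "d ^ (q + 1) = c * d"
    by (simp only: d_def power_q_power_Suc_q)
  have "d ^ (q + 1) \<noteq> 1"
    unfolding d_power using c_mult_power_q_neq_1 by (simp add: d_def)
  have "1 - d ^ (q + 1) = 1 + c * d"
    unfolding d_power by (rule minus_CHAR_2[OF CHAR_eq_2])
  have "(\<Sum>u\<in>unit_roots (q + 1). moebius u ^ e * u ^ q)
      = (\<Sum>v\<in>unit_roots (q + 1). v ^ e * moebius v ^ q)"
    by (rule sum.reindex_bij_witness[of _ moebius moebius])
      (use moebius_moebius moebius_mem_unit_roots in auto)
  also have "\<dots> = (\<Sum>v\<in>unit_roots (q + 1). c * (v ^ (e + 1) / (v - d)) + v ^ e / (v - d))"
    by (intro sum.cong refl)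
      (simp add: moebius_power_q d_def minus_CHAR_2[OF CHAR_eq_2] field_simps add_divide_distrib)
  also have "\<dots> = c * (\<Sum>v\<in>unit_roots (q + 1). v ^ (e + 1) / (v - d))
      + (\<Sum>v\<in>unit_roots (q + 1). v ^ e / (v - d))"
    by (simp add: sum.distrib sum_distrib_left)
  also have "\<dots> = (c * d ^ e + d ^ (e - 1)) / (1 + c * d)"
    using assms sum_unit_roots_power_divide_diff[OF card_unit_roots_Suc_q \<open>d ^ (q + 1) \<noteq> 1\<close>, of "e + 1"]
      sum_unit_roots_power_divide_diff[OF card_unit_roots_Suc_q \<open>d ^ (q + 1) \<noteq> 1\<close>, of e]
    unfolding \<open>1 - d ^ (q + 1) = 1 + c * d\<close> by (simp add: of_nat_q_eq_0 add_divide_distrib)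
  also have "\<dots> = d ^ (e - 1)"
  proof -
    have "c * d ^ e + d ^ (e - 1) = d ^ (e - 1) * (1 + c * d)"
      using assms(1) by (cases e) (simp_all add: algebra_simps)
    moreover have "1 + c * d \<noteq> 0"
      unfolding d_def by (rule one_add_c_mult_power_q_nonzero)
    ultimately show ?thesis
      by simp
  qed
  also have "\<dots> = c ^ (q * (e - 1))"
    by (simp add: d_def power_mult)
  finally show ?thesis .
qed

end

theorem lemma10:
  fixes c :: "'a::{field,finite}" and m q e :: nat and p :: "'a poly"
  assumes "card (UNIV :: 'a set) = q ^ 2"
    and "q = 2 ^ m" and "m \<ge> 2"
    and "c \<noteq> 0" and "c \<notin> unit_roots (q + 1)"
    and "1 \<le> e" and "e \<le> q"
    and "is_poly_expansion q (\<lambda>u. ((u + c ^ q) / (c * u + 1)) ^ e) p"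
  shows "coeff p 0 = 0 \<and> coeff p 1 = c ^ (q * (e - 1))"
proof -
  interpret unit_roots_moebius q m c
    using assms(1-5) by unfold_locales simp_all
  have expansion: "is_poly_expansion q (\<lambda>u. moebius u ^ e) p"
    using assms(8) by (simp add: moebius_def)
  have "coeff p 0 = (\<Sum>u\<in>unit_roots (q + 1). moebius u ^ e)"
    using coeff_eq_sum_unit_roots[OF expansion, of 0] by (simp add: unit_roots_def)
  moreover have "coeff p 1 = (\<Sum>u\<in>unit_roots (q + 1). moebius u ^ e * u ^ q)"
    using coeff_eq_sum_unit_roots[OF expansion, of 1] assms(6,7) by simp
  ultimately show ?thesis
    using sum_moebius_power sum_moebius_power_mult_power_q assms(6,7) by simp
qed

end
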